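(* Let $(G,{\bf p})$ be a framework in $\mathbb R^d$ whose configuration ${\bf p}$ has $d$-dimensional affine span. Let $\tilde V$ be a subset of the vertices, $\tilde G$ the subgraph induced on $\tilde V$, and $\tilde{\bf p}$ the corresponding subconfiguration, and suppose $(\tilde G,\tilde{\bf p})$ is universally rigid and the affine span of $\tilde{\bf p}$ has dimension $\tilde d<d$. Suppose that for each vertex $i\notin\tilde V$, the affine span of the points ${\bf p}_k$ for neighbours $k\in\tilde V$ of $i$ has dimension $\tilde d$. Write $\mathbb R^d=\mathbb R^{\tilde d}\times\mathbb R^{d-\tilde d}$ with the affine span of $\tilde{\bf p}$ equal to $\mathbb R^{\tilde d}\times\{{\bf p}_0\}$, and let $\pi:\mathbb R^d\to\mathbb R^{d-\tilde d}$ be the orthogonal projection onto the second factor, so $\pi$ maps all points of $\tilde{\bf p}$ to ${\bf p}_0$. Let $G'$ be the subgraph of $G$ induced on the vertices not in $\tilde V$. Then $(G,{\bf p})$ is universally rigid (respectively dimensionally rigid) if and only if the coned framework ${\bf p}_0*(G',\pi({\bf p}))$ in $\mathbb R^{d-\tilde d}$ is universally rigid (respectively dimensionally rigid).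
   Context: The coned framework ${\bf p}_0*(G',\pi({\bf p}))$ has a vertex at ${\bf p}_0$ joined by bars to every vertex $i$ of $G'$, vertex $i$ placed at $\pi({\bf p}_i)$, together with the bars of $G'$. A framework is universally rigid if every configuration in any $\mathbb R^D$ with the same bar lengths has all pairwise distances equal to those of the original; a framework with $d'$-dimensional affine span is dimensionally rigid if every configuration in any $\mathbb R^D$ with the same bar lengths has affine span of dimension at most $d'$. *)

theory Defs
  imports "HOL-Analysis.Analysis" "HOL-Library.Function_Algebras"
begin

text \<open>Points of R^D are represented as functions nat => real; a configuration q of a
vertex set V lies in R^D when all coordinates k >= D of every q i vanish.
This allows quantification over all dimensions D inside a formula.\<close>

definition scaleF :: "real \<Rightarrow> (nat \<Rightarrow> real) \<Rightarrow> (nat \<Rightarrow> real)" where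
  "scaleF r f = (\<lambda>k. r * f k)"

lemma vector_space_scaleF: "vector_space scaleF"
  by unfold_locales (auto simp: scaleF_def fun_eq_iff algebra_simps)

definition sqd :: "nat \<Rightarrow> (nat \<Rightarrow> real) \<Rightarrow> (nat \<Rightarrow> real) \<Rightarrow> real" where
  "sqd D x y = (\<Sum>k<D. (x k - y k)^2)"

definition in_space :: "nat \<Rightarrow> 'v set \<Rightarrow> ('v \<Rightarrow> nat \<Rightarrow> real) \<Rightarrow> bool" where
  "in_space D V q \<longleftrightarrow> (\<forall>i\<in>V. \<forall>k\<ge>D. q i k = 0)"

text \<open>dimension of the affine span of the points q i, i in V (-1 for the empty set)\<close>
definition affdim :: "'v set \<Rightarrow> ('v \<Rightarrow> nat \<Rightarrow> real) \<Rightarrow> int" where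
  "affdim V q = (if V = {} then -1
     else int (vector_space.dim scaleF {q i - q j | i j. i \<in> V \<and> j \<in> V}))"

definition equivalent_fw ::
  "'v set \<Rightarrow> ('v \<times> 'v) set \<Rightarrow> nat \<Rightarrow> ('v \<Rightarrow> nat \<Rightarrow> real) \<Rightarrow> nat \<Rightarrow> ('v \<Rightarrow> nat \<Rightarrow> real) \<Rightarrow> bool" where
  "equivalent_fw V E D p D' q \<longleftrightarrow> in_space D' V q \<and>
     (\<forall>(i,j)\<in>E. sqd D' (q i) (q j) = sqd D (p i) (p j))"

definition universally_rigid ::
  "'v set \<Rightarrow> ('v \<times> 'v) set \<Rightarrow> nat \<Rightarrow> ('v \<Rightarrow> nat \<Rightarrow> real) \<Rightarrow> bool" where
  "universally_rigid V E D p \<longleftrightarrow>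
     (\<forall>D' q. equivalent_fw V E D p D' q \<longrightarrow>
        (\<forall>i\<in>V. \<forall>j\<in>V. sqd D' (q i) (q j) = sqd D (p i) (p j)))"

definition dimensionally_rigid ::
  "'v set \<Rightarrow> ('v \<times> 'v) set \<Rightarrow> nat \<Rightarrow> ('v \<Rightarrow> nat \<Rightarrow> real) \<Rightarrow> bool" where
  "dimensionally_rigid V E D p \<longleftrightarrow>
     (\<forall>D' q. equivalent_fw V E D p D' q \<longrightarrow> affdim V q \<le> affdim V p)"

definition induced :: "('v \<times> 'v) set \<Rightarrow> 'v set \<Rightarrow> ('v \<times> 'v) set" where
  "induced E W = {(i,j) \<in> E. i \<in> W \<and> j \<in> W}"

definition neighbours :: "('v \<times> 'v) set \<Rightarrow> 'v \<Rightarrow> 'v set" where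
  "neighbours E i = {k. (i,k) \<in> E}"

definition proj2 :: "nat \<Rightarrow> nat \<Rightarrow> (nat \<Rightarrow> real) \<Rightarrow> (nat \<Rightarrow> real)" where
  "proj2 d dt x = (\<lambda>k. if k < d - dt then x (k + dt) else 0)"

text \<open>Coned framework p0 * (G', q): cone vertex None, vertex i of G' is Some i.\<close>
definition cone_vertices :: "'v set \<Rightarrow> 'v option set" where
  "cone_vertices V' = insert None (Some ` V')"

definition cone_edges :: "'v set \<Rightarrow> ('v \<times> 'v) set \<Rightarrow> ('v option \<times> 'v option) set" where
  "cone_edges V' E' = {(None, Some i) | i. i \<in> V'} \<union> {(Some i, None) | i. i \<in> V'}
      \<union> {(Some i, Some j) | i j. (i,j) \<in> E'}"

definition cone_config :: "(nat \<Rightarrow> real) \<Rightarrow> ('v \<Rightarrow> nat \<Rightarrow> real) \<Rightarrow> 'v option \<Rightarrow> nat \<Rightarrow> real" where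
  "cone_config p0 q v = (case v of None \<Rightarrow> p0 | Some i \<Rightarrow> q i)"

end

theory Submission
  imports Defs
begin

text \<open>
  Write R^d = R^dt x R^(d-dt) so that the points of Vt lie in R^dt x {p0}. Every squared
  distance of p splits into its part in the first dt coordinates plus the squared distance of
  the projected vertices, with all of Vt collapsed onto the cone vertex.

  A configuration equivalent to the cone framework lifts to one equivalent to (G, p) by
  appending it to the first dt coordinates of p; this gives both forward implications.
  Conversely, let q be equivalent to p. Universal rigidity of the Vt-part fixes the Gram data
  of the differences inside Vt, and since the Vt-neighbours of every other vertex already span
  all these differences, q also preserves every distance to Vt. Equal Gram data transfer
  linear relations, so subtracting from q the combination of Vt-differences that represents
  the first dt coordinates of p leaves a configuration b whose squared distances are those of
  q minus the first-dt-coordinate part of those of p; b is equivalent to the cone framework.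
  For dimensional rigidity both constructions are combined with a rank count: the differences
  of q span at most dt dimensions more than those of b.
\<close>

global_interpretation F: vector_space scaleF by (rule vector_space_scaleF)

lemma sum_apply: "(\<Sum>t\<in>I. g t) k = (\<Sum>t\<in>I. g t k)"
  by (induction I rule: infinite_finite_induct) auto

lemma linear_scaleFI:
  assumes "\<And>x y. f (x + y) = f x + f y" and "\<And>r x. f (scaleF r x) = scaleF r (f x)"
  shows "Vector_Spaces.linear scaleF scaleF f"
  using assms vector_space_scaleF by (simp add: Vector_Spaces.linear_iff)

definition lincomb :: "'i set \<Rightarrow> ('i \<Rightarrow> real) \<Rightarrow> ('i \<Rightarrow> nat \<Rightarrow> real) \<Rightarrow> nat \<Rightarrow> real" where
  "lincomb I c f = (\<lambda>k. \<Sum>t\<in>I. c t * f t k)"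

lemma lincomb_eq_sum: "lincomb I c f = (\<Sum>t\<in>I. scaleF (c t) (f t))"
  by (simp add: lincomb_def fun_eq_iff sum_apply scaleF_def)

lemma lincomb_in_span: "finite I \<Longrightarrow> lincomb I c f \<in> F.span (f ` I)"
  unfolding lincomb_eq_sum by (intro F.span_sum F.span_scale F.span_base) auto

lemma lincomb_diff: "lincomb I c f - lincomb I c' f = lincomb I (\<lambda>t. c t - c' t) f"
  by (simp add: lincomb_def fun_eq_iff sum_subtractf left_diff_distrib)

lemma in_span_imp_lincomb:
  assumes "finite I" "x \<in> F.span (f ` I)"
  obtains c where "x = lincomb I c f"
proof -
  from assms(2) have "\<exists>c. x = lincomb I c f"
  proof (induction rule: F.span_induct_alt)
    case base
    show ?case by (intro exI[of _ "\<lambda>_. 0"]) (simp add: lincomb_def fun_eq_iff)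
  next
    case (step a x y)
    then obtain t c where t: "t \<in> I" "x = f t" and c: "y = lincomb I c f" by blast
    have "(\<Sum>s\<in>I. (if s = t then a else 0) * f s k) = (\<Sum>s\<in>I. if s = t then a * f t k else 0)" for k
      by (rule sum.cong) auto
    then have "(\<Sum>s\<in>I. (if s = t then a else 0) * f s k) = a * f t k" for k
      using t(1) assms(1) by simp
    then have "scaleF a x + y = lincomb I (\<lambda>s. (if s = t then a else 0) + c s) f"
      using t c by (simp add: lincomb_def fun_eq_iff scaleF_def distrib_right sum.distrib)
    then show ?case by blast
  qed
  then show thesis using that by blast
qed

lemma span_subset_span: "A \<subseteq> F.span B \<Longrightarrow> F.span A \<subseteq> F.span B"
  by (rule F.span_minimal[OF _ F.subspace_span])

lemma dim_Un_le:
  assumes "X \<subseteq> F.span (A \<union> B)" "finite A" "finite B"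
  shows "F.dim X \<le> F.dim A + F.dim B"
proof -
  obtain BA where BA: "BA \<subseteq> A" "A \<subseteq> F.span BA" "card BA = F.dim A"
    by (rule F.basis_exists)
  obtain BB where BB: "BB \<subseteq> B" "B \<subseteq> F.span BB" "card BB = F.dim B"
    by (rule F.basis_exists)
  have "A \<union> B \<subseteq> F.span (BA \<union> BB)"
    using BA(2) BB(2) F.span_mono[of BA "BA \<union> BB"] F.span_mono[of BB "BA \<union> BB"] by auto
  then have "X \<subseteq> F.span (BA \<union> BB)"
    using assms(1) by (metis span_subset_span order_trans)
  moreover have "finite (BA \<union> BB)"
    using finite_subset[OF BA(1) assms(2)] finite_subset[OF BB(1) assms(3)] by simp
  ultimately have "F.dim X \<le> card (BA \<union> BB)" by (rule F.dim_le_card)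
  also have "\<dots> \<le> card BA + card BB" by (rule card_Un_le)
  finally show ?thesis using BA(3) BB(3) by simp
qed

lemma independent_card_le_dim_of_span:
  assumes "F.independent S" "S \<subseteq> F.span W" "finite W"
  shows "card S \<le> F.dim W"
proof -
  obtain B where B: "B \<subseteq> W" "W \<subseteq> F.span B" "card B = F.dim W"
    by (rule F.basis_exists)
  have "S \<subseteq> F.span B" using assms(2) span_subset_span[OF B(2)] by (rule order_trans)
  moreover have "finite B" using B(1) assms(3) by (rule finite_subset)
  ultimately show ?thesis
    using F.independent_span_bound[of B S] assms(1) B(3) by simp
qed

lemma span_superset_of_dim_le:
  assumes "S \<subseteq> F.span T" "finite T" "finite S" "F.dim T \<le> F.dim S"
  shows "T \<subseteq> F.span S"
proof
  fix t assume t: "t \<in> T"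
  obtain B where B: "B \<subseteq> S" "F.independent B" "S \<subseteq> F.span B" "card B = F.dim S"
    by (rule F.basis_exists)
  have finB: "finite B" using B(1) assms(3) by (rule finite_subset)
  show "t \<in> F.span S"
  proof (rule ccontr)
    assume "t \<notin> F.span S"
    then have tB: "t \<notin> F.span B" "t \<notin> B" using F.span_mono[OF B(1)] B(1) F.span_base by auto
    have "insert t B \<subseteq> F.span T" using t B(1) assms(1) F.span_base by auto
    then have "card (insert t B) \<le> F.dim T"
      by (rule independent_card_le_dim_of_span[OF F.independent_insertI[OF tB(1) B(2)] _ assms(2)])
    then show False using tB(2) finB B(4) assms(4) by simp
  qed
qed

lemma obtain_index_basis:
  assumes "finite I"
  obtains K where "K \<subseteq> I" "inj_on f K" "F.independent (f ` K)" "f ` I \<subseteq> F.span (f ` K)"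
    "card K = F.dim (f ` I)"
proof -
  obtain B where B: "B \<subseteq> f ` I" "F.independent B" "f ` I \<subseteq> F.span B" "card B = F.dim (f ` I)"
    by (rule F.basis_exists)
  obtain K where K: "K \<subseteq> I" "inj_on f K" "B = f ` K"
    using B(1) by (auto simp: subset_image_inj)
  show thesis
    using K B(2-4) card_image[OF K(2)] by (intro that) simp_all
qed

lemma dim_image_le_of_linear:
  assumes "Vector_Spaces.linear scaleF scaleF f" "finite S"
  shows "F.dim (f ` S) \<le> F.dim S"
proof -
  interpret f: Vector_Spaces.linear scaleF scaleF f by fact
  obtain B where B: "B \<subseteq> S" "S \<subseteq> F.span B" "card B = F.dim S"
    by (rule F.basis_exists)
  have finB: "finite B" using B(1) assms(2) by (rule finite_subset)
  have "F.dim (f ` S) \<le> card (f ` B)"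
    using f.spans_image[OF B(2)] finB by (intro F.dim_le_card) simp_all
  also have "\<dots> \<le> card B" using finB by (rule card_image_le)
  finally show ?thesis using B(3) by simp
qed

lemma independent_coeffs_zero:
  assumes "F.independent A" "finite A" "(\<Sum>v\<in>A. scaleF (u v) v) = 0" "v \<in> A"
  shows "u v = 0"
  using assms F.independent_explicit_module by blast

lemma independent_Un_if_independent_image:
  assumes "Vector_Spaces.linear scaleF scaleF f"
    and B0: "F.independent B0" "finite B0" "\<forall>x\<in>B0. f x = 0"
    and C: "F.independent (f ` C)" "inj_on f C" "finite C"
  shows "F.independent (B0 \<union> C)" and "B0 \<inter> C = {}"
proof -
  interpret f: Vector_Spaces.linear scaleF scaleF f by fact
  have "0 \<notin> f ` C" using F.dependent_zero C(1) by metis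
  then show disj: "B0 \<inter> C = {}" using B0(3) by (metis disjoint_iff image_eqI)
  show "F.independent (B0 \<union> C)"
  proof (rule F.independent_if_scalars_zero)
    show "finite (B0 \<union> C)" using B0(2) C(3) by simp
  next
    fix u x assume sum0: "(\<Sum>x\<in>B0 \<union> C. scaleF (u x) x) = 0" and x: "x \<in> B0 \<union> C"
    have split: "(\<Sum>x\<in>B0 \<union> C. scaleF (u x) x) = (\<Sum>x\<in>B0. scaleF (u x) x) + (\<Sum>x\<in>C. scaleF (u x) x)"
      using B0(2) C(3) disj by (rule sum.union_disjoint)
    have "f (\<Sum>x\<in>B0 \<union> C. scaleF (u x) x) = (\<Sum>x\<in>C. scaleF (u x) (f x))"
      unfolding split f.add f.sum f.scale using B0(3) by simp
    also have "\<dots> = (\<Sum>y\<in>f ` C. scaleF (u (the_inv_into C f y)) y)"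
      using C(2) by (simp add: sum.reindex the_inv_into_f_f)
    finally have sumC: "(\<Sum>y\<in>f ` C. scaleF (u (the_inv_into C f y)) y) = 0"
      unfolding sum0 by simp
    have uC: "u x = 0" if "x \<in> C" for x
      using independent_coeffs_zero[OF C(1) finite_imageI[OF C(3)] sumC imageI[OF that]]
      by (simp add: the_inv_into_f_f[OF C(2) that])
    then have "(\<Sum>x\<in>B0. scaleF (u x) x) = 0" using sum0 split by simp
    then have "u x = 0" if "x \<in> B0"
      using independent_coeffs_zero[OF B0(1,2)] that by blast
    then show "u x = 0" using x uC by auto
  qed
qed

lemma dim_add_dim_image_le:
  assumes "Vector_Spaces.linear scaleF scaleF f" "finite S" "S0 \<subseteq> S" "\<forall>x\<in>S0. f x = 0"
  shows "F.dim S0 + F.dim (f ` S) \<le> F.dim S"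
proof -
  obtain B0 where B0: "B0 \<subseteq> S0" "F.independent B0" "card B0 = F.dim S0"
    by (rule F.basis_exists)
  obtain C where C: "C \<subseteq> S" "inj_on f C" "F.independent (f ` C)" "f ` S \<subseteq> F.span (f ` C)"
    "card C = F.dim (f ` S)"
    by (rule obtain_index_basis[OF assms(2)])
  have fin: "finite B0" "finite C"
    using finite_subset[OF B0(1) finite_subset[OF assms(3,2)]] finite_subset[OF C(1) assms(2)] .
  have "\<forall>x\<in>B0. f x = 0" using B0(1) assms(4) by blast
  note indep = independent_Un_if_independent_image[OF assms(1) B0(2) fin(1) this C(3,2) fin(2)]
  have "card (B0 \<union> C) \<le> F.dim S"
    using indep(1) B0(1) C(1) assms(2,3) by (intro independent_card_le_dim_of_span) (auto intro: F.span_base)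
  then show ?thesis using B0(3) C(5) fin indep(2) by (simp add: card_Un_disjoint)
qed

definition unit_vec :: "nat \<Rightarrow> nat \<Rightarrow> real" where
  "unit_vec j = (\<lambda>k. if k = j then 1 else 0)"

definition take_coords :: "nat \<Rightarrow> (nat \<Rightarrow> real) \<Rightarrow> nat \<Rightarrow> real" where
  "take_coords n x = (\<lambda>k. if k < n then x k else 0)"

definition drop_coords :: "nat \<Rightarrow> (nat \<Rightarrow> real) \<Rightarrow> nat \<Rightarrow> real" where
  "drop_coords n x = (\<lambda>k. x (k + n))"

definition append_coords :: "nat \<Rightarrow> (nat \<Rightarrow> real) \<Rightarrow> (nat \<Rightarrow> real) \<Rightarrow> nat \<Rightarrow> real" where
  "append_coords n x y = (\<lambda>k. if k < n then x k else y (k - n))"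

lemma drop_coords_diff: "drop_coords n (x - y) = drop_coords n x - drop_coords n y"
  by (simp add: drop_coords_def fun_eq_iff)

lemma drop_append_coords [simp]: "drop_coords n (append_coords n x y) = y"
  by (simp add: drop_coords_def append_coords_def fun_eq_iff)

lemma take_coords_in_span: "take_coords n x \<in> F.span (unit_vec ` {..<n})"
proof -
  have "(\<Sum>j<n. x j * unit_vec j k) = take_coords n x k" for k
    by (simp add: unit_vec_def take_coords_def if_distrib[of "(*) _"] cong: if_cong)
  then have "take_coords n x = lincomb {..<n} x unit_vec"
    by (simp add: lincomb_def fun_eq_iff)
  then show ?thesis using lincomb_in_span[of "{..<n}" x unit_vec] by simp
qed

lemma dim_le_of_support:
  assumes "\<forall>x\<in>X. \<forall>k\<ge>n. x k = 0"
  shows "F.dim X \<le> n"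
proof -
  have "X \<subseteq> F.span (unit_vec ` {..<n})"
  proof
    fix x assume "x \<in> X"
    then have "take_coords n x = x" using assms by (auto simp: take_coords_def fun_eq_iff)
    then show "x \<in> F.span (unit_vec ` {..<n})" using take_coords_in_span[of n x] by simp
  qed
  then have "F.dim X \<le> card (unit_vec ` {..<n})" by (rule F.dim_le_card) simp
  also have "\<dots> \<le> n" using card_image_le[of "{..<n}" unit_vec] by simp
  finally show ?thesis .
qed

lemma linear_drop_coords: "Vector_Spaces.linear scaleF scaleF (drop_coords n)"
  by (rule linear_scaleFI) (simp_all add: drop_coords_def scaleF_def fun_eq_iff)

lemma dim_le_add_dim_drop_coords:
  assumes "finite S"
  shows "F.dim S \<le> n + F.dim (drop_coords n ` S)"
proof -
  let ?pad = "append_coords n 0"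
  have lin_pad: "Vector_Spaces.linear scaleF scaleF ?pad"
    by (rule linear_scaleFI) (simp_all add: append_coords_def scaleF_def fun_eq_iff)
  have "S \<subseteq> F.span (unit_vec ` {..<n} \<union> ?pad ` drop_coords n ` S)"
  proof
    fix x assume x: "x \<in> S"
    let ?U = "unit_vec ` {..<n} \<union> ?pad ` drop_coords n ` S"
    have "x = take_coords n x + ?pad (drop_coords n x)"
      by (simp add: fun_eq_iff take_coords_def append_coords_def drop_coords_def)
    moreover have "take_coords n x \<in> F.span ?U"
      using take_coords_in_span F.span_mono[of "unit_vec ` {..<n}" ?U] by blast
    moreover have "?pad (drop_coords n x) \<in> F.span ?U"
      using x by (intro F.span_base) simp
    ultimately show "x \<in> F.span ?U" by (metis F.span_add)
  qed
  then have "F.dim S \<le> F.dim (unit_vec ` {..<n}) + F.dim (?pad ` drop_coords n ` S)"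
    using assms by (intro dim_Un_le) auto
  also have "F.dim (unit_vec ` {..<n}) \<le> n"
    by (rule dim_le_of_support) (auto simp: unit_vec_def)
  also have "F.dim (?pad ` drop_coords n ` S) \<le> F.dim (drop_coords n ` S)"
    using lin_pad assms by (intro dim_image_le_of_linear) auto
  finally show ?thesis by simp
qed

definition dotp :: "nat \<Rightarrow> (nat \<Rightarrow> real) \<Rightarrow> (nat \<Rightarrow> real) \<Rightarrow> real" where
  "dotp D x y = (\<Sum>k<D. x k * y k)"

lemma sqd_eq_dotp: "sqd D x y = dotp D (x - y) (x - y)"
  by (simp add: sqd_def dotp_def power2_eq_square)

lemma sqd_self [simp]: "sqd D x x = 0"
  by (simp add: sqd_def)

lemma sqd_commute: "sqd D x y = sqd D y x"
  by (simp add: sqd_def power2_commute)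

lemma sqd_diff_diff: "sqd D (x - z) (y - z) = sqd D x y"
  by (simp add: sqd_def)

lemma dotp_commute: "dotp D x y = dotp D y x"
  by (simp add: dotp_def mult.commute)

lemma dotp_diff_left: "dotp D (x - y) z = dotp D x z - dotp D y z"
  by (simp add: dotp_def sum_subtractf left_diff_distrib)

lemma dotp_diff_right: "dotp D z (x - y) = dotp D z x - dotp D z y"
  by (simp add: dotp_def sum_subtractf right_diff_distrib)

lemma dotp_diff_self: "dotp D (x - y) (x - y) = dotp D x x - 2 * dotp D x y + dotp D y y"
  by (simp add: dotp_diff_left dotp_diff_right dotp_commute[of D y x])

lemma sqd_expand_at: "sqd D x y = sqd D x z - 2 * dotp D (x - z) (y - z) + sqd D y z"
proof -
  have "sqd D x y = dotp D ((x - z) - (y - z)) ((x - z) - (y - z))"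
    by (simp add: sqd_eq_dotp)
  also have "\<dots> = dotp D (x - z) (x - z) - 2 * dotp D (x - z) (y - z) + dotp D (y - z) (y - z)"
    by (rule dotp_diff_self)
  finally show ?thesis by (simp only: sqd_eq_dotp)
qed

lemma dotp_polarization:
  "2 * dotp D (x - y) (u - v) = sqd D x v + sqd D y u - sqd D x u - sqd D y v"
proof -
  have "sqd D x v + sqd D y u - sqd D x u - sqd D y v
     = (\<Sum>k<D. (x k - v k)^2 + (y k - u k)^2 - (x k - u k)^2 - (y k - v k)^2)"
    by (simp add: sqd_def sum.distrib sum_subtractf)
  also have "\<dots> = (\<Sum>k<D. 2 * ((x k - y k) * (u k - v k)))"
    by (rule sum.cong) (auto simp: power2_eq_square algebra_simps)
  finally show ?thesis by (simp add: dotp_def sum_distrib_left)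
qed

lemma dotp_lincomb_left: "dotp D (lincomb I c f) y = (\<Sum>t\<in>I. c t * dotp D (f t) y)"
proof -
  have "dotp D (lincomb I c f) y = (\<Sum>k<D. \<Sum>t\<in>I. c t * f t k * y k)"
    by (simp add: dotp_def lincomb_def sum_distrib_right)
  also have "\<dots> = (\<Sum>t\<in>I. \<Sum>k<D. c t * f t k * y k)" by (rule sum.swap)
  finally show ?thesis by (simp add: dotp_def sum_distrib_left mult.assoc)
qed

lemma dotp_lincomb_right: "dotp D y (lincomb I c f) = (\<Sum>t\<in>I. c t * dotp D y (f t))"
  using dotp_lincomb_left[of D I c f y] by (simp add: dotp_commute)

lemma dotp_self_eq_0D:
  assumes "dotp D x x = 0" "k < D"
  shows "x k = 0"
proof -
  have "\<forall>j\<in>{..<D}. x j * x j = 0"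
    using assms(1) by (subst sum_nonneg_eq_0_iff[symmetric]) (auto simp: dotp_def)
  then show ?thesis using assms(2) by auto
qed

lemma dotp_take_coords:
  assumes "n \<le> D"
  shows "dotp D x (take_coords n x) = dotp n x x"
    and "dotp D (take_coords n x) (take_coords n x) = dotp n x x"
proof -
  have D: "{..<D} = {..<n} \<union> {n..<D}" "{..<n} \<inter> {n..<D} = {}" using assms by auto
  show "dotp D x (take_coords n x) = dotp n x x"
    unfolding dotp_def D(1) by (subst sum.union_disjoint) (auto simp: take_coords_def)
  show "dotp D (take_coords n x) (take_coords n x) = dotp n x x"
    unfolding dotp_def D(1) by (subst sum.union_disjoint) (auto simp: take_coords_def)
qed

lemma sqd_add_dim: "sqd (a + b) x y = sqd a x y + sqd b (drop_coords a x) (drop_coords a y)"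
proof -
  have "(\<Sum>k<a + b. f k) = (\<Sum>k<a. f k) + (\<Sum>k<b. f (k + a))" for f :: "nat \<Rightarrow> real"
    by (induction b) (auto simp: add.commute add.left_commute)
  then show ?thesis by (simp add: sqd_def drop_coords_def)
qed

lemma sqd_append_coords:
  "sqd (a + b) (append_coords a x y) (append_coords a x' y') = sqd a x x' + sqd b y y'"
  by (simp only: sqd_add_dim drop_append_coords) (simp add: sqd_def append_coords_def)

lemma dotp_diff_diff_eq_if_sqd_eq:
  assumes "sqd D1 (q a) (q e) = sqd D2 (p a) (p e)" "sqd D1 (q b) (q c) = sqd D2 (p b) (p c)"
    "sqd D1 (q a) (q c) = sqd D2 (p a) (p c)" "sqd D1 (q b) (q e) = sqd D2 (p b) (p e)"
  shows "dotp D1 (q a - q b) (q c - q e) = dotp D2 (p a - p b) (p c - p e)"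
  using dotp_polarization[of D1 "q a" "q b" "q c" "q e"] dotp_polarization[of D2 "p a" "p b" "p c" "p e"]
    assms by simp

lemma dotp_lincomb_transfer:
  assumes "\<forall>t\<in>I. dotp D1 x (f t) = dotp D2 y (g t)"
  shows "dotp D1 x (lincomb I c f) = dotp D2 y (lincomb I c g)"
  using assms by (simp add: dotp_lincomb_right)

lemma dotp_sub_lincomb_transfer:
  assumes cross: "\<forall>t\<in>I. dotp D1 x (f t) = dotp D2 y (g t)"
    and gram: "\<forall>s\<in>I. \<forall>t\<in>I. dotp D1 (f s) (f t) = dotp D2 (g s) (g t)"
  shows "dotp D1 (x - lincomb I c f) (x - lincomb I c f)
    = dotp D1 x x - 2 * dotp D2 y (lincomb I c g) + dotp D2 (lincomb I c g) (lincomb I c g)"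
  using cross gram by (simp add: dotp_diff_self dotp_lincomb_left dotp_lincomb_right)

lemma lincomb_transfer:
  assumes cross: "\<forall>t\<in>I. dotp D1 x (f t) = dotp D2 y (g t)"
    and gram: "\<forall>s\<in>I. \<forall>t\<in>I. dotp D1 (f s) (f t) = dotp D2 (g s) (g t)"
    and norm: "dotp D1 x x = dotp D2 y y"
    and y: "y = lincomb I c g" and k: "k < D1"
  shows "x k = lincomb I c f k"
proof -
  have "dotp D1 (x - lincomb I c f) (x - lincomb I c f) = 0"
    unfolding dotp_sub_lincomb_transfer[OF cross gram] norm y by simp
  then have "(x - lincomb I c f) k = 0" using k by (rule dotp_self_eq_0D)
  then show ?thesis by simp
qed

definition pdiff :: "('v \<Rightarrow> nat \<Rightarrow> real) \<Rightarrow> 'v \<times> 'v \<Rightarrow> nat \<Rightarrow> real" where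
  "pdiff q = (\<lambda>(a, b). q a - q b)"

lemma pdiff_apply [simp]: "pdiff q (a, b) = q a - q b"
  by (simp add: pdiff_def)

lemma affdim_eq_dim:
  assumes "X \<noteq> {}"
  shows "affdim X q = int (F.dim (pdiff q ` (X \<times> X)))"
proof -
  have "{q i - q j | i j. i \<in> X \<and> j \<in> X} = pdiff q ` (X \<times> X)"
    by (auto simp: pdiff_def)
  then show ?thesis using assms by (simp add: affdim_def)
qed

lemma pdiff_subset_span_Un:
  assumes "\<forall>i\<in>V. q i - q r - b i \<in> F.span A"
  shows "pdiff q ` (V \<times> V) \<subseteq> F.span (A \<union> pdiff b ` (V \<times> V))"
proof clarify
  fix i j assume ij: "i \<in> V" "j \<in> V"
  let ?U = "A \<union> pdiff b ` (V \<times> V)"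
  have "q i - q r - b i \<in> F.span ?U" "q j - q r - b j \<in> F.span ?U"
    using assms ij F.span_mono[of A ?U] by blast+
  moreover have "b i - b j \<in> F.span ?U"
    using ij by (intro F.span_base UnI2 image_eqI[of _ _ "(i, j)"]) simp_all
  moreover have "q i - q j = (q i - q r - b i) - (q j - q r - b j) + (b i - b j)"
    by (simp add: algebra_simps)
  ultimately show "pdiff q (i, j) \<in> F.span ?U"
    by (simp only: pdiff_apply F.span_add F.span_diff)
qed

locale cone_reduction =
  fixes V Vt :: "'v set" and E :: "('v \<times> 'v) set"
    and d dt :: nat and p :: "'v \<Rightarrow> nat \<Rightarrow> real" and p0 :: "nat \<Rightarrow> real"
  assumes finV: "finite V"
    and edges: "E \<subseteq> V \<times> V"
    and p_space: "in_space d V p"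
    and p_dim: "affdim V p = int d"
    and Vt_sub: "Vt \<subseteq> V"
    and Vt_ur: "universally_rigid Vt (induced E Vt) d p"
    and Vt_dim: "affdim Vt p = int dt"
    and dt_less: "dt < d"
    and nbrs: "\<forall>i \<in> V - Vt. affdim (neighbours E i \<inter> Vt) p = int dt"
    and p0_space: "\<forall>k\<ge>d - dt. p0 k = 0"
    and coords: "\<forall>i\<in>Vt. \<forall>k. dt \<le> k \<and> k < d \<longrightarrow> p i k = p0 (k - dt)"
begin

abbreviation "cone_V \<equiv> cone_vertices (V - Vt)"
abbreviation "cone_E \<equiv> cone_edges (V - Vt) (induced E (V - Vt))"
abbreviation "cone_p \<equiv> cone_config p0 (\<lambda>i. proj2 d dt (p i))"

definition cone_vertex :: "'v \<Rightarrow> 'v option" where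
  "cone_vertex i = (if i \<in> Vt then None else Some i)"

definition base :: 'v where
  "base = (SOME r. r \<in> Vt)"

definition Vt_diffs :: "(nat \<Rightarrow> real) set" where
  "Vt_diffs = pdiff p ` (Vt \<times> Vt)"

lemma Vt_nonempty: "Vt \<noteq> {}"
  using Vt_dim by (auto simp: affdim_def)

lemma base_in_Vt: "base \<in> Vt"
  unfolding base_def using Vt_nonempty by (simp add: some_in_eq)

lemma base_in_V: "base \<in> V"
  using base_in_Vt Vt_sub by auto

lemma cone_vertex_base [simp]: "cone_vertex base = None"
  using base_in_Vt by (simp add: cone_vertex_def)

lemma V_nonempty: "V \<noteq> {}"
  using base_in_V by auto

lemma dim_pdiff_p: "F.dim (pdiff p ` (V \<times> V)) = d"
  using p_dim affdim_eq_dim[OF V_nonempty] by simp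

lemma finite_Vt: "finite Vt"
  using Vt_sub finV by (rule finite_subset)

lemma finite_Vt_pairs: "finite (Vt \<times> Vt)"
  using finite_Vt by simp

lemma finite_Vt_diffs: "finite Vt_diffs"
  using finite_Vt by (simp add: Vt_diffs_def)

lemma dim_Vt_diffs: "F.dim Vt_diffs = dt"
  using Vt_dim Vt_nonempty by (simp add: affdim_eq_dim Vt_diffs_def)

lemma p_vanish: "i \<in> V \<Longrightarrow> d \<le> k \<Longrightarrow> p i k = 0"
  using p_space by (simp add: in_space_def)

lemma Vt_diffs_vanish:
  assumes "x \<in> Vt_diffs" "dt \<le> k"
  shows "x k = 0"
proof -
  obtain a b where ab: "a \<in> Vt" "b \<in> Vt" "x = p a - p b"
    using assms(1) by (auto simp: Vt_diffs_def pdiff_def)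
  show ?thesis
  proof (cases "k < d")
    case True
    then show ?thesis using ab coords assms(2) by simp
  next
    case False
    then have "p a k = 0" "p b k = 0" using ab(1,2) Vt_sub p_vanish by auto
    then show ?thesis using ab(3) by simp
  qed
qed

lemma take_coords_Vt_diff:
  assumes "a \<in> Vt" "b \<in> Vt"
  shows "take_coords dt (p a - p b) = p a - p b"
proof -
  have "p a - p b \<in> Vt_diffs" using assms unfolding Vt_diffs_def pdiff_def by force
  then show ?thesis using Vt_diffs_vanish by (fastforce simp: take_coords_def fun_eq_iff)
qed

lemma drop_coords_p:
  assumes "i \<in> V"
  shows "drop_coords dt (p i) = cone_p (cone_vertex i)"
proof
  fix k
  show "drop_coords dt (p i) k = cone_p (cone_vertex i) k"
  proof (cases "k < d - dt")
    case True
    then show ?thesis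
      using coords by (simp add: drop_coords_def cone_config_def cone_vertex_def proj2_def)
  next
    case False
    then show ?thesis using p_vanish[OF assms] p0_space
      by (simp add: drop_coords_def cone_config_def cone_vertex_def proj2_def)
  qed
qed

lemma sqd_p_split: "i \<in> V \<Longrightarrow> j \<in> V \<Longrightarrow>
   sqd d (p i) (p j) = sqd dt (p i) (p j) + sqd (d - dt) (cone_p (cone_vertex i)) (cone_p (cone_vertex j))"
  using sqd_add_dim[of dt "d - dt" "p i" "p j"] dt_less drop_coords_p by simp

lemma cone_V_eq_image: "cone_V = cone_vertex ` V"
  using base_in_V Vt_sub cone_vertex_base[symmetric]
  by (auto simp: cone_vertices_def cone_vertex_def image_iff)

lemma pdiff_cone_V: "pdiff f ` (cone_V \<times> cone_V) = pdiff (\<lambda>i. f (cone_vertex i)) ` (V \<times> V)"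
proof -
  have "pdiff f \<circ> map_prod cone_vertex cone_vertex = pdiff (\<lambda>i. f (cone_vertex i))"
    by (auto simp: pdiff_def fun_eq_iff)
  then show ?thesis
    unfolding cone_V_eq_image map_prod_surj_on[OF refl refl, symmetric] image_comp by simp
qed

lemma edge_cone_vertex:
  "(i, j) \<in> E \<Longrightarrow> cone_vertex i = cone_vertex j \<or> (cone_vertex i, cone_vertex j) \<in> cone_E"
  using edges by (auto simp: cone_vertex_def cone_edges_def induced_def)

lemma cone_edgeE:
  assumes "(x, y) \<in> cone_E"
  obtains i j where "i \<in> V" "j \<in> V" "x = cone_vertex i" "y = cone_vertex j"
    "(i, j) \<in> E \<or> i \<in> Vt \<or> j \<in> Vt"
proof -
  note None = cone_vertex_base[symmetric]
  from assms consider i where "x = None" "y = Some i" "i \<in> V - Vt"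
    | i where "x = Some i" "y = None" "i \<in> V - Vt"
    | i j where "x = Some i" "y = Some j" "(i, j) \<in> E" "i \<notin> Vt" "j \<notin> Vt"
    by (auto simp: cone_edges_def induced_def)
  then show thesis
  proof cases
    case 1 then show ?thesis using that[of base i] None base_in_V base_in_Vt by (simp add: cone_vertex_def)
  next
    case 2 then show ?thesis using that[of i base] None base_in_V base_in_Vt by (simp add: cone_vertex_def)
  next
    case 3 then show ?thesis using that[of i j] edges by (auto simp: cone_vertex_def)
  qed
qed

lemma unit_vecs_in_span_Vt_diffs: "unit_vec ` {..<dt} \<subseteq> F.span Vt_diffs"
proof (rule span_superset_of_dim_le)
  show "Vt_diffs \<subseteq> F.span (unit_vec ` {..<dt})"
  proof
    fix x assume "x \<in> Vt_diffs"
    then have "take_coords dt x = x" using Vt_diffs_vanish by (auto simp: take_coords_def fun_eq_iff)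
    then show "x \<in> F.span (unit_vec ` {..<dt})" using take_coords_in_span[of dt x] by simp
  qed
  show "F.dim (unit_vec ` {..<dt}) \<le> F.dim Vt_diffs"
    using dim_le_of_support[of "unit_vec ` {..<dt}" dt] dim_Vt_diffs by (auto simp: unit_vec_def)
qed (simp_all add: finite_Vt_diffs)

lemma take_coords_in_span_Vt_diffs: "take_coords dt x \<in> F.span Vt_diffs"
  by (rule subsetD[OF span_subset_span[OF unit_vecs_in_span_Vt_diffs] take_coords_in_span])

definition lift :: "('v option \<Rightarrow> nat \<Rightarrow> real) \<Rightarrow> 'v \<Rightarrow> nat \<Rightarrow> real" where
  "lift q' i = append_coords dt (p i) (q' (cone_vertex i) - q' None)"

lemma sqd_lift:
  "sqd (dt + D') (lift q' i) (lift q' j) = sqd dt (p i) (p j) + sqd D' (q' (cone_vertex i)) (q' (cone_vertex j))"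
  by (simp add: lift_def sqd_append_coords sqd_diff_diff)

lemma drop_coords_lift: "drop_coords dt (lift q' i) = q' (cone_vertex i) - q' None"
  by (simp add: lift_def)

lemma lift_equivalent:
  assumes "equivalent_fw cone_V cone_E (d - dt) cone_p D' q'"
  shows "equivalent_fw V E d p (dt + D') (lift q')"
  unfolding equivalent_fw_def
proof (intro conjI)
  have "in_space D' cone_V q'" using assms by (simp add: equivalent_fw_def)
  then show "in_space (dt + D') V (lift q')"
    using cone_V_eq_image base_in_V cone_vertex_base
    by (auto simp: in_space_def lift_def append_coords_def)
  show "\<forall>(i, j)\<in>E. sqd (dt + D') (lift q' i) (lift q' j) = sqd d (p i) (p j)"
  proof clarify
    fix i j assume ij: "(i, j) \<in> E"
    then have "i \<in> V" "j \<in> V" using edges by auto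
    moreover have "sqd D' (q' (cone_vertex i)) (q' (cone_vertex j))
        = sqd (d - dt) (cone_p (cone_vertex i)) (cone_p (cone_vertex j))"
      using edge_cone_vertex[OF ij] assms by (auto simp: equivalent_fw_def)
    ultimately show "sqd (dt + D') (lift q' i) (lift q' j) = sqd d (p i) (p j)"
      by (simp add: sqd_lift sqd_p_split)
  qed
qed

lemma universally_rigid_imp_cone_universally_rigid:
  assumes "universally_rigid V E d p"
  shows "universally_rigid cone_V cone_E (d - dt) cone_p"
  unfolding universally_rigid_def
proof (intro allI impI ballI)
  fix D' q' x y
  assume eq: "equivalent_fw cone_V cone_E (d - dt) cone_p D' q'" and "x \<in> cone_V" "y \<in> cone_V"
  then obtain i j where ij: "i \<in> V" "j \<in> V" "x = cone_vertex i" "y = cone_vertex j"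
    unfolding cone_V_eq_image by blast
  have "sqd (dt + D') (lift q' i) (lift q' j) = sqd d (p i) (p j)"
    using assms lift_equivalent[OF eq] ij(1,2) unfolding universally_rigid_def by blast
  then show "sqd D' (q' x) (q' y) = sqd (d - dt) (cone_p x) (cone_p y)"
    using ij by (simp add: sqd_lift sqd_p_split)
qed

lemma drop_coords_pdiff_p: "drop_coords dt ` pdiff p ` (V \<times> V) = pdiff cone_p ` (cone_V \<times> cone_V)"
  unfolding pdiff_cone_V image_comp
  by (rule image_cong) (auto simp: pdiff_def drop_coords_diff drop_coords_p)

lemma dim_le_dim_cone_p: "d \<le> dt + F.dim (pdiff cone_p ` (cone_V \<times> cone_V))"
  using dim_le_add_dim_drop_coords[of "pdiff p ` (V \<times> V)" dt] finV
  by (simp add: drop_coords_pdiff_p dim_pdiff_p)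

lemma Vt_diffs_subset_pdiff_lift: "Vt_diffs \<subseteq> pdiff (lift q') ` (V \<times> V)"
proof
  fix x assume "x \<in> Vt_diffs"
  then obtain a b where ab: "a \<in> Vt" "b \<in> Vt" "x = p a - p b"
    by (auto simp: Vt_diffs_def pdiff_def)
  have "lift q' a - lift q' b = take_coords dt (p a - p b)"
    using ab(1,2) by (simp add: lift_def cone_vertex_def take_coords_def append_coords_def fun_eq_iff)
  then have "x = pdiff (lift q') (a, b)"
    using ab take_coords_Vt_diff[OF ab(1,2)] by simp
  moreover have "(a, b) \<in> V \<times> V" using ab(1,2) Vt_sub by auto
  ultimately show "x \<in> pdiff (lift q') ` (V \<times> V)" by (rule image_eqI)
qed

lemma drop_coords_pdiff_lift:
  "drop_coords dt ` pdiff (lift q') ` (V \<times> V) = pdiff q' ` (cone_V \<times> cone_V)"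
proof -
  have "drop_coords dt \<circ> pdiff (lift q') = pdiff (\<lambda>i. q' (cone_vertex i))"
    by (simp add: fun_eq_iff pdiff_def drop_coords_diff drop_coords_lift case_prod_beta)
  then show ?thesis unfolding pdiff_cone_V image_comp by simp
qed

lemma dimensionally_rigid_imp_cone_dimensionally_rigid:
  assumes "dimensionally_rigid V E d p"
  shows "dimensionally_rigid cone_V cone_E (d - dt) cone_p"
  unfolding dimensionally_rigid_def
proof (intro allI impI)
  fix D' q' assume eq: "equivalent_fw cone_V cone_E (d - dt) cone_p D' q'"
  let ?S = "pdiff (lift q') ` (V \<times> V)"
  have "affdim V (lift q') \<le> affdim V p"
    using assms lift_equivalent[OF eq] unfolding dimensionally_rigid_def by blast
  then have dim_S: "F.dim ?S \<le> d"
    using p_dim by (simp add: affdim_eq_dim[OF V_nonempty])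
  have "\<forall>x\<in>Vt_diffs. drop_coords dt x = 0"
    using Vt_diffs_vanish by (simp add: drop_coords_def fun_eq_iff)
  then have "F.dim Vt_diffs + F.dim (drop_coords dt ` ?S) \<le> F.dim ?S"
    using linear_drop_coords finV Vt_diffs_subset_pdiff_lift by (intro dim_add_dim_image_le) auto
  then have "dt + F.dim (pdiff q' ` (cone_V \<times> cone_V)) \<le> d"
    using dim_S dim_Vt_diffs by (simp add: drop_coords_pdiff_lift)
  moreover have "cone_V \<noteq> {}" by (simp add: cone_vertices_def)
  ultimately show "affdim cone_V q' \<le> affdim cone_V cone_p"
    using dim_le_dim_cone_p by (simp add: affdim_eq_dim)
qed

lemma cone_config_cone_vertex:
  "\<forall>i\<in>Vt. b i = 0 \<Longrightarrow> cone_config 0 b (cone_vertex i) = b i"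
  by (simp add: cone_config_def cone_vertex_def)

lemma dim_pdiff_cone_p: "F.dim (pdiff cone_p ` (cone_V \<times> cone_V)) \<le> d - dt"
proof (rule dim_le_of_support, clarify)
  fix x y k assume "d - dt \<le> k"
  then show "pdiff cone_p (x, y) k = 0"
    using p0_space by (simp add: cone_config_def proj2_def split: option.splits)
qed

lemma neighbours_Vt_nonempty:
  assumes "i \<in> V - Vt"
  shows "neighbours E i \<inter> Vt \<noteq> {}"
proof
  assume "neighbours E i \<inter> Vt = {}"
  then have "affdim (neighbours E i \<inter> Vt) p = -1" by (simp add: affdim_def)
  then show False using nbrs assms by simp
qed

lemma Vt_diffs_in_span_neighbour_diffs:
  assumes "i \<in> V - Vt"
  defines "N \<equiv> neighbours E i \<inter> Vt"
  shows "Vt_diffs \<subseteq> F.span (pdiff p ` (N \<times> N))"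
proof (rule span_superset_of_dim_le)
  show "pdiff p ` (N \<times> N) \<subseteq> F.span Vt_diffs"
    unfolding Vt_diffs_def N_def by (auto intro!: F.span_base)
  have "affdim N p = int dt" using nbrs assms(1) by (simp add: N_def)
  then have "F.dim (pdiff p ` (N \<times> N)) = dt"
    using affdim_eq_dim[OF neighbours_Vt_nonempty[OF assms(1)]] by (simp add: N_def)
  then show "F.dim Vt_diffs \<le> F.dim (pdiff p ` (N \<times> N))" using dim_Vt_diffs by simp
  show "finite (pdiff p ` (N \<times> N))"
    using finite_subset[of N Vt] finite_Vt by (simp add: N_def)
qed (rule finite_Vt_diffs)

lemma obtain_Vt_coefficients:
  obtains \<gamma> where "\<And>i. take_coords dt (p i - p base) = lincomb (Vt \<times> Vt) (\<gamma> i) (pdiff p)"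
proof -
  have "\<forall>i. \<exists>c. take_coords dt (p i - p base) = lincomb (Vt \<times> Vt) c (pdiff p)"
    using take_coords_in_span_Vt_diffs finite_Vt
    by (metis Vt_diffs_def finite_SigmaI in_span_imp_lincomb)
  then show thesis using that by metis
qed

context
  fixes D' :: nat and q :: "'v \<Rightarrow> nat \<Rightarrow> real"
  assumes q_equiv: "equivalent_fw V E d p D' q"
begin

lemma q_vanish: "i \<in> V \<Longrightarrow> D' \<le> k \<Longrightarrow> q i k = 0"
  using q_equiv by (simp add: equivalent_fw_def in_space_def)

lemma sqd_q_edge: "(i, j) \<in> E \<Longrightarrow> sqd D' (q i) (q j) = sqd d (p i) (p j)"
  using q_equiv by (auto simp: equivalent_fw_def)

lemma sqd_q_Vt:
  assumes "k \<in> Vt" "l \<in> Vt"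
  shows "sqd D' (q k) (q l) = sqd d (p k) (p l)"
proof -
  have "equivalent_fw Vt (induced E Vt) d p D' q"
    using q_equiv Vt_sub by (auto simp: equivalent_fw_def in_space_def induced_def)
  then show ?thesis using Vt_ur assms unfolding universally_rigid_def by blast
qed

lemma dotp_q_Vt:
  "a \<in> Vt \<Longrightarrow> b \<in> Vt \<Longrightarrow> c \<in> Vt \<Longrightarrow> e \<in> Vt \<Longrightarrow>
    dotp D' (q a - q b) (q c - q e) = dotp d (p a - p b) (p c - p e)"
  by (intro dotp_diff_diff_eq_if_sqd_eq) (simp_all add: sqd_q_Vt)

lemma lincomb_Vt_transfer:
  assumes I: "I \<subseteq> Vt \<times> Vt" and kl: "k \<in> Vt" "l \<in> Vt"
    and eq: "p k - p l = lincomb I c (pdiff p)"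
  shows "q k - q l = lincomb I c (pdiff q)"
proof
  fix t
  show "(q k - q l) t = lincomb I c (pdiff q) t"
  proof (cases "t < D'")
    case True
    show ?thesis
    proof (rule lincomb_transfer[OF _ _ _ eq True])
      show "\<forall>s\<in>I. dotp D' (q k - q l) (pdiff q s) = dotp d (p k - p l) (pdiff p s)"
        using I kl by (auto simp: pdiff_def dotp_q_Vt)
      show "\<forall>s\<in>I. \<forall>s'\<in>I. dotp D' (pdiff q s) (pdiff q s') = dotp d (pdiff p s) (pdiff p s')"
        using I by (fastforce simp: pdiff_def intro: dotp_q_Vt)
      show "dotp D' (q k - q l) (q k - q l) = dotp d (p k - p l) (p k - p l)"
        using kl by (intro dotp_q_Vt)
    qed
  next
    case False
    then have "\<forall>x\<in>Vt. q x t = 0" using Vt_sub q_vanish by auto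
    then show ?thesis using I kl by (auto simp: lincomb_def pdiff_def intro!: sum.neutral)
  qed
qed

lemma sqd_q_to_Vt:
  assumes i: "i \<in> V" and k: "k \<in> Vt"
  shows "sqd D' (q i) (q k) = sqd d (p i) (p k)"
proof (cases "i \<in> Vt")
  case True
  then show ?thesis using k by (rule sqd_q_Vt)
next
  case False
  define N where "N = neighbours E i \<inter> Vt"
  have iN: "a \<in> N \<Longrightarrow> (i, a) \<in> E" "N \<subseteq> Vt" for a by (auto simp: N_def neighbours_def)
  have "N \<noteq> {}" unfolding N_def using i False by (intro neighbours_Vt_nonempty) simp
  then obtain k0 where k0: "k0 \<in> N" by blast
  have k0_Vt: "k0 \<in> Vt" using k0 iN(2) by blast
  have finN: "finite (N \<times> N)" using finite_subset[OF iN(2) finite_Vt] by simp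
  have "pdiff p (k, k0) \<in> Vt_diffs"
    unfolding Vt_diffs_def using k k0_Vt by (intro imageI) simp
  then have "p k - p k0 \<in> F.span (pdiff p ` (N \<times> N))"
    using Vt_diffs_in_span_neighbour_diffs[of i] i False by (auto simp: N_def)
  with finN obtain \<gamma> where \<gamma>: "p k - p k0 = lincomb (N \<times> N) \<gamma> (pdiff p)"
    by (rule in_span_imp_lincomb)
  have q\<gamma>: "q k - q k0 = lincomb (N \<times> N) \<gamma> (pdiff q)"
    using iN(2) by (intro lincomb_Vt_transfer[OF _ k k0_Vt \<gamma>]) auto
  have "\<forall>s\<in>N \<times> N. dotp D' (q i - q k0) (pdiff q s) = dotp d (p i - p k0) (pdiff p s)"
  proof clarify
    fix a b assume "a \<in> N" "b \<in> N"
    then show "dotp D' (q i - q k0) (pdiff q (a, b)) = dotp d (p i - p k0) (pdiff p (a, b))"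
      using iN k0_Vt unfolding pdiff_apply
      by (intro dotp_diff_diff_eq_if_sqd_eq[of D' q i b d p k0 a]) (auto simp: sqd_q_edge sqd_q_Vt)
  qed
  then have cross: "dotp D' (q i - q k0) (q k - q k0) = dotp d (p i - p k0) (p k - p k0)"
    unfolding \<gamma> q\<gamma> by (rule dotp_lincomb_transfer)
  have "sqd D' (q i) (q k)
      = sqd D' (q i) (q k0) - 2 * dotp D' (q i - q k0) (q k - q k0) + sqd D' (q k) (q k0)"
    by (rule sqd_expand_at)
  also have "\<dots> = sqd d (p i) (p k0) - 2 * dotp d (p i - p k0) (p k - p k0) + sqd d (p k) (p k0)"
    unfolding cross sqd_q_edge[OF iN(1)[OF k0]] sqd_q_Vt[OF k k0_Vt] ..
  also have "\<dots> = sqd d (p i) (p k)" by (rule sqd_expand_at[symmetric])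
  finally show ?thesis .
qed

lemma dotp_q_to_Vt:
  "i \<in> V \<Longrightarrow> j \<in> V \<Longrightarrow> c \<in> Vt \<Longrightarrow> e \<in> Vt \<Longrightarrow>
    dotp D' (q i - q j) (q c - q e) = dotp d (p i - p j) (p c - p e)"
  by (intro dotp_diff_diff_eq_if_sqd_eq) (simp_all add: sqd_q_to_Vt)

lemma dim_q_Vt_diffs: "F.dim (pdiff q ` (Vt \<times> Vt)) \<le> dt"
proof -
  obtain K where K: "K \<subseteq> Vt \<times> Vt" "inj_on (pdiff p) K" "F.independent (pdiff p ` K)"
      "pdiff p ` (Vt \<times> Vt) \<subseteq> F.span (pdiff p ` K)" "card K = F.dim (pdiff p ` (Vt \<times> Vt))"
    by (rule obtain_index_basis[OF finite_Vt_pairs])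
  have finK: "finite K" using K(1) finite_Vt_pairs by (rule finite_subset)
  have "pdiff q ` (Vt \<times> Vt) \<subseteq> F.span (pdiff q ` K)"
  proof clarify
    fix k l assume kl: "k \<in> Vt" "l \<in> Vt"
    then have "pdiff p (k, l) \<in> pdiff p ` (Vt \<times> Vt)" by (intro imageI) simp
    then have "pdiff p (k, l) \<in> F.span (pdiff p ` K)" by (rule subsetD[OF K(4)])
    with finK obtain c where "pdiff p (k, l) = lincomb K c (pdiff p)"
      by (rule in_span_imp_lincomb)
    then have "q k - q l = lincomb K c (pdiff q)" by (simp add: lincomb_Vt_transfer[OF K(1) kl])
    then show "pdiff q (k, l) \<in> F.span (pdiff q ` K)" using lincomb_in_span[OF finK] by simp
  qed
  then have "F.dim (pdiff q ` (Vt \<times> Vt)) \<le> card (pdiff q ` K)"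
    by (rule F.dim_le_card) (simp add: finK)
  also have "\<dots> \<le> card K" using finK by (rule card_image_le)
  finally show ?thesis using K(5) dim_Vt_diffs by (simp add: Vt_diffs_def)
qed

lemma sqd_q_if_edge_or_Vt:
  assumes "i \<in> V" "j \<in> V" "(i, j) \<in> E \<or> i \<in> Vt \<or> j \<in> Vt"
  shows "sqd D' (q i) (q j) = sqd d (p i) (p j)"
  using assms(3)
proof (elim disjE)
  assume "(i, j) \<in> E"
  then show ?thesis by (rule sqd_q_edge)
next
  assume "i \<in> Vt"
  then show ?thesis using sqd_q_to_Vt[OF assms(2)] sqd_commute by metis
next
  assume "j \<in> Vt"
  then show ?thesis using sqd_q_to_Vt[OF assms(1)] by simp
qed

lemma sqd_q_sub_lincomb:
  assumes i: "i \<in> V" and j: "j \<in> V"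
    and c: "take_coords dt (p i - p j) = lincomb (Vt \<times> Vt) c (pdiff p)"
  shows "dotp D' (q i - q j - lincomb (Vt \<times> Vt) c (pdiff q)) (q i - q j - lincomb (Vt \<times> Vt) c (pdiff q))
    + sqd dt (p i) (p j) = sqd D' (q i) (q j)"
proof -
  let ?y = "p i - p j"
  have cross: "\<forall>s\<in>Vt \<times> Vt. dotp D' (q i - q j) (pdiff q s) = dotp d ?y (pdiff p s)"
    using i j by (auto simp: dotp_q_to_Vt)
  have gram: "\<forall>s\<in>Vt \<times> Vt. \<forall>s'\<in>Vt \<times> Vt. dotp D' (pdiff q s) (pdiff q s') = dotp d (pdiff p s) (pdiff p s')"
    by (auto simp: dotp_q_Vt)
  have dt_le: "dt \<le> d" using dt_less by simp
  show ?thesis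
    unfolding dotp_sub_lincomb_transfer[OF cross gram] c[symmetric] dotp_take_coords[OF dt_le]
    by (simp add: sqd_eq_dotp)
qed

lemma exists_cone_config:
  obtains b where "\<forall>i\<in>V. \<forall>j\<in>V. sqd D' (b i) (b j) + sqd dt (p i) (p j) = sqd D' (q i) (q j)"
    and "in_space D' V b" and "\<forall>i\<in>Vt. b i = 0"
    and "\<forall>i\<in>V. q i - q base - b i \<in> F.span (pdiff q ` (Vt \<times> Vt))"
proof -
  obtain \<gamma> where \<gamma>: "\<And>i. take_coords dt (p i - p base) = lincomb (Vt \<times> Vt) (\<gamma> i) (pdiff p)"
    using obtain_Vt_coefficients by blast
  \<comment> \<open>\<open>a i\<close> is what the first \<open>dt\<close> coordinates of \<open>p i - p base\<close> become under \<open>q\<close>\<close>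
  define a where "a i = lincomb (Vt \<times> Vt) (\<gamma> i) (pdiff q)" for i
  define b where "b i = q i - q base - a i" for i
  have "sqd D' (b i) (b j) + sqd dt (p i) (p j) = sqd D' (q i) (q j)" if ij: "i \<in> V" "j \<in> V" for i j
  proof -
    let ?c = "\<lambda>s. \<gamma> i s - \<gamma> j s"
    have "take_coords dt (p i - p j) = take_coords dt (p i - p base) - take_coords dt (p j - p base)"
      by (simp add: take_coords_def fun_eq_iff)
    then have "take_coords dt (p i - p j) = lincomb (Vt \<times> Vt) ?c (pdiff p)"
      unfolding \<gamma> lincomb_diff .
    moreover have "b i - b j = q i - q j - lincomb (Vt \<times> Vt) ?c (pdiff q)"
      unfolding b_def a_def lincomb_diff[symmetric] by (simp add: algebra_simps)
    ultimately show ?thesis using sqd_q_sub_lincomb[OF ij] by (simp add: sqd_eq_dotp)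
  qed
  moreover have "in_space D' V b"
    unfolding in_space_def
  proof (intro ballI allI impI)
    fix i k assume i: "i \<in> V" and k: "D' \<le> k"
    have qk: "q x k = 0" if "x \<in> V" for x using q_vanish that k by blast
    then have "q x k = 0" if "x \<in> Vt" for x using that Vt_sub by blast
    then show "b i k = 0"
      using qk i base_in_V by (auto simp: b_def a_def lincomb_def intro!: sum.neutral)
  qed
  moreover have "b i = 0" if "i \<in> Vt" for i
  proof -
    have "p i - p base = lincomb (Vt \<times> Vt) (\<gamma> i) (pdiff p)"
      using \<gamma>[of i] take_coords_Vt_diff[OF that base_in_Vt] by simp
    then have "q i - q base = a i"
      unfolding a_def by (rule lincomb_Vt_transfer[OF subset_refl that base_in_Vt])
    then show ?thesis by (simp add: b_def)
  qed
  moreover have "q i - q base - b i \<in> F.span (pdiff q ` (Vt \<times> Vt))" for i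
    using lincomb_in_span[OF finite_Vt_pairs] by (simp add: b_def a_def)
  ultimately show thesis using that by blast
qed

lemma cone_config_equivalent:
  assumes b_sqd: "\<forall>i\<in>V. \<forall>j\<in>V. sqd D' (b i) (b j) + sqd dt (p i) (p j) = sqd D' (q i) (q j)"
    and b_space: "in_space D' V b" and b_Vt: "\<forall>i\<in>Vt. b i = 0"
  shows "equivalent_fw cone_V cone_E (d - dt) cone_p D' (cone_config 0 b)"
  unfolding equivalent_fw_def
proof (intro conjI)
  show "in_space D' cone_V (cone_config 0 b)"
    using b_space unfolding cone_V_eq_image in_space_def
    by (auto simp: cone_config_cone_vertex[OF b_Vt])
  show "\<forall>(x, y)\<in>cone_E. sqd D' (cone_config 0 b x) (cone_config 0 b y) = sqd (d - dt) (cone_p x) (cone_p y)"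
  proof clarify
    fix x y assume "(x, y) \<in> cone_E"
    then obtain i j where ij: "i \<in> V" "j \<in> V" "x = cone_vertex i" "y = cone_vertex j"
      "(i, j) \<in> E \<or> i \<in> Vt \<or> j \<in> Vt"
      by (rule cone_edgeE)
    have "sqd D' (b i) (b j) + sqd dt (p i) (p j) = sqd d (p i) (p j)"
      using b_sqd ij(1,2) sqd_q_if_edge_or_Vt[OF ij(1,2,5)] by simp
    then show "sqd D' (cone_config 0 b x) (cone_config 0 b y) = sqd (d - dt) (cone_p x) (cone_p y)"
      using sqd_p_split[OF ij(1,2)] by (simp add: ij(3,4) cone_config_cone_vertex[OF b_Vt])
  qed
qed

end

lemma cone_universally_rigid_imp_universally_rigid:
  assumes "universally_rigid cone_V cone_E (d - dt) cone_p"
  shows "universally_rigid V E d p"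
  unfolding universally_rigid_def
proof (intro allI impI ballI)
  fix D' q i j assume eq: "equivalent_fw V E d p D' q" and ij: "i \<in> V" "j \<in> V"
  obtain b where b_sqd: "\<forall>i\<in>V. \<forall>j\<in>V. sqd D' (b i) (b j) + sqd dt (p i) (p j) = sqd D' (q i) (q j)"
    and b_space: "in_space D' V b" and b_Vt: "\<forall>i\<in>Vt. b i = 0"
    by (rule exists_cone_config[OF eq])
  have "sqd D' (cone_config 0 b (cone_vertex i)) (cone_config 0 b (cone_vertex j))
      = sqd (d - dt) (cone_p (cone_vertex i)) (cone_p (cone_vertex j))"
    using assms cone_config_equivalent[OF eq b_sqd b_space b_Vt] ij
    unfolding universally_rigid_def cone_V_eq_image by blast
  then have "sqd D' (b i) (b j) = sqd (d - dt) (cone_p (cone_vertex i)) (cone_p (cone_vertex j))"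
    by (simp add: cone_config_cone_vertex[OF b_Vt])
  moreover have "sqd D' (b i) (b j) + sqd dt (p i) (p j) = sqd D' (q i) (q j)"
    using b_sqd ij by blast
  ultimately show "sqd D' (q i) (q j) = sqd d (p i) (p j)"
    using sqd_p_split[OF ij] by linarith
qed

lemma cone_dimensionally_rigid_imp_dimensionally_rigid:
  assumes "dimensionally_rigid cone_V cone_E (d - dt) cone_p"
  shows "dimensionally_rigid V E d p"
  unfolding dimensionally_rigid_def
proof (intro allI impI)
  fix D' q assume eq: "equivalent_fw V E d p D' q"
  obtain b where b_sqd: "\<forall>i\<in>V. \<forall>j\<in>V. sqd D' (b i) (b j) + sqd dt (p i) (p j) = sqd D' (q i) (q j)"
    and b_space: "in_space D' V b" and b_Vt: "\<forall>i\<in>Vt. b i = 0"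
    and b_span: "\<forall>i\<in>V. q i - q base - b i \<in> F.span (pdiff q ` (Vt \<times> Vt))"
    by (rule exists_cone_config[OF eq])
  have cone_V_nonempty: "cone_V \<noteq> {}" by (simp add: cone_vertices_def)
  have "affdim cone_V (cone_config 0 b) \<le> affdim cone_V cone_p"
    using assms cone_config_equivalent[OF eq b_sqd b_space b_Vt] unfolding dimensionally_rigid_def by blast
  moreover have "pdiff (cone_config 0 b) ` (cone_V \<times> cone_V) = pdiff b ` (V \<times> V)"
    unfolding pdiff_cone_V by (simp add: cone_config_cone_vertex[OF b_Vt])
  ultimately have "F.dim (pdiff b ` (V \<times> V)) \<le> d - dt"
    using dim_pdiff_cone_p by (simp add: affdim_eq_dim[OF cone_V_nonempty])
  moreover have "F.dim (pdiff q ` (V \<times> V)) \<le> F.dim (pdiff q ` (Vt \<times> Vt)) + F.dim (pdiff b ` (V \<times> V))"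
    using pdiff_subset_span_Un[OF b_span] finite_Vt_pairs finV by (intro dim_Un_le) auto
  ultimately have "F.dim (pdiff q ` (V \<times> V)) \<le> d"
    using dim_q_Vt_diffs[OF eq] dt_less by simp
  then show "affdim V q \<le> affdim V p"
    using p_dim by (simp add: affdim_eq_dim[OF V_nonempty])
qed

end

theorem mainTheorem11:
  fixes V Vt :: "'v set" and E :: "('v \<times> 'v) set"
    and d dt :: nat and p :: "'v \<Rightarrow> nat \<Rightarrow> real" and p0 :: "nat \<Rightarrow> real"
  assumes finV: "finite V"
    and edges: "E \<subseteq> V \<times> V" and symE: "sym E" and irrE: "\<forall>i. (i,i) \<notin> E"
    and p_space: "in_space d V p"
    and p_dim: "affdim V p = int d"
    and Vt_sub: "Vt \<subseteq> V"
    and Vt_ur: "universally_rigid Vt (induced E Vt) d p"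
    and Vt_dim: "affdim Vt p = int dt"
    and dt_less: "dt < d"
    and nbrs: "\<forall>i \<in> V - Vt. affdim (neighbours E i \<inter> Vt) p = int dt"
    and p0_space: "\<forall>k\<ge>d - dt. p0 k = 0"
    and coords: "\<forall>i\<in>Vt. \<forall>k. dt \<le> k \<and> k < d \<longrightarrow> p i k = p0 (k - dt)"
  shows "(universally_rigid V E d p \<longleftrightarrow>
            universally_rigid (cone_vertices (V - Vt)) (cone_edges (V - Vt) (induced E (V - Vt)))
              (d - dt) (cone_config p0 (\<lambda>i. proj2 d dt (p i))))
       \<and> (dimensionally_rigid V E d p \<longleftrightarrow>
            dimensionally_rigid (cone_vertices (V - Vt)) (cone_edges (V - Vt) (induced E (V - Vt)))
              (d - dt) (cone_config p0 (\<lambda>i. proj2 d dt (p i))))"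
proof -
  interpret cone_reduction V Vt E d dt p p0
    using assms by unfold_locales auto
  show ?thesis
    using universally_rigid_imp_cone_universally_rigid cone_universally_rigid_imp_universally_rigid
      dimensionally_rigid_imp_cone_dimensionally_rigid cone_dimensionally_rigid_imp_dimensionally_rigid by blast
qed

end
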